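(* Let $p,q$ be distinct propositional variables. The formula $\Box(p\vee q)\to((\neg\Box\neg p\to\Box q)\to\Box q)$ is derivable in $\mathsf{CK}\oplus\mathsf{N}_\Diamond\oplus\mathsf{wCD}$ but not in $\mathsf{CK}$.
   Context: Formulas: $\mathbf{L}$ is generated from a countably infinite set of propositional variables by $\varphi ::= p \mid \bot \mid \varphi\wedge\varphi \mid \varphi\vee\varphi \mid \varphi\to\varphi \mid \Box\varphi \mid \Diamond\varphi$; $\neg\varphi:=\varphi\to\bot$. Axioms: $\mathsf{K}_\Box$: $\Box(\varphi\to\psi)\to(\Box\varphi\to\Box\psi)$; $\mathsf{K}_\Diamond$: $\Box(\varphi\to\psi)\to(\Diamond\varphi\to\Diamond\psi)$; $\mathsf{N}_\Diamond$: $\Diamond\bot\to\bot$; $\mathsf{wCD}$: $\Box(\varphi\vee\psi)\to((\Diamond\varphi\to\Box\psi)\to\Box\psi)$. For a set $\mathsf{Ax}$ of axioms, $\mathsf{CK}\oplus\mathsf{Ax}$ is the relation $\Gamma\vdash_{\mathsf{Ax}}\varphi$ inductively generated by: (Ax) $\Gamma\vdash\varphi$ whenever $\varphi$ is a substitution instance of an axiom of a standard Hilbert axiomatisation of intuitionistic propositional logic, of $\mathsf{K}_\Box$, of $\mathsf{K}_\Diamond$, or of an element of $\mathsf{Ax}$; (El) $\Gamma\vdash\varphi$ if $\varphi\in\Gamma$; (MP) from $\Gamma\vdash\varphi$ and $\Gamma\vdash\varphi\to\psi$ infer $\Gamma\vdash\psi$; (Nec) from $\emptyset\vdash\varphi$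 infer $\Gamma\vdash\Box\varphi$. $\mathsf{CK}$ is the case $\mathsf{Ax}=\emptyset$. A formula is derivable in a logic if $\emptyset\vdash_{\mathsf{Ax}}\varphi$. *)

theory Defs
  imports Main
begin

datatype fm =
    Var nat
  | Bot
  | Conj fm fm
  | Disj fm fm
  | Imp fm fm
  | Box fm
  | Dia fm

definition Neg :: "fm \<Rightarrow> fm" where
  "Neg \<phi> = Imp \<phi> Bot"

primrec subst :: "(nat \<Rightarrow> fm) \<Rightarrow> fm \<Rightarrow> fm" where
  "subst \<sigma> (Var n) = \<sigma> n"
| "subst \<sigma> Bot = Bot"
| "subst \<sigma> (Conj a b) = Conj (subst \<sigma> a) (subst \<sigma> b)"
| "subst \<sigma> (Disj a b) = Disj (subst \<sigma> a) (subst \<sigma> b)"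
| "subst \<sigma> (Imp a b) = Imp (subst \<sigma> a) (subst \<sigma> b)"
| "subst \<sigma> (Box a) = Box (subst \<sigma> a)"
| "subst \<sigma> (Dia a) = Dia (subst \<sigma> a)"

abbreviation "P0 \<equiv> Var 0"
abbreviation "P1 \<equiv> Var 1"
abbreviation "P2 \<equiv> Var 2"

definition IPC_axioms :: "fm set" where
  "IPC_axioms = {
     Imp P0 (Imp P1 P0),
     Imp (Imp P0 (Imp P1 P2)) (Imp (Imp P0 P1) (Imp P0 P2)),
     Imp (Conj P0 P1) P0,
     Imp (Conj P0 P1) P1,
     Imp P0 (Imp P1 (Conj P0 P1)),
     Imp P0 (Disj P0 P1),
     Imp P1 (Disj P0 P1),
     Imp (Imp P0 P2) (Imp (Imp P1 P2) (Imp (Disj P0 P1) P2)),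
     Imp Bot P0 }"

definition K_Box :: fm where
  "K_Box = Imp (Box (Imp P0 P1)) (Imp (Box P0) (Box P1))"

definition K_Dia :: fm where
  "K_Dia = Imp (Box (Imp P0 P1)) (Imp (Dia P0) (Dia P1))"

definition N_Dia :: fm where
  "N_Dia = Imp (Dia Bot) Bot"

definition wCD :: fm where
  "wCD = Imp (Box (Disj P0 P1)) (Imp (Imp (Dia P0) (Box P1)) (Box P1))"

inductive derives :: "fm set \<Rightarrow> fm set \<Rightarrow> fm \<Rightarrow> bool" for Ax :: "fm set" where
  ax: "\<chi> \<in> IPC_axioms \<union> {K_Box, K_Dia} \<union> Ax \<Longrightarrow> derives Ax \<Gamma> (subst \<sigma> \<chi>)"
| el: "\<phi> \<in> \<Gamma> \<Longrightarrow> derives Ax \<Gamma> \<phi>"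
| mp: "derives Ax \<Gamma> \<phi> \<Longrightarrow> derives Ax \<Gamma> (Imp \<phi> \<psi>) \<Longrightarrow> derives Ax \<Gamma> \<psi>"
| nec: "derives Ax {} \<phi> \<Longrightarrow> derives Ax \<Gamma> (Box \<phi>)"

definition derivable :: "fm set \<Rightarrow> fm \<Rightarrow> bool" where
  "derivable Ax \<phi> = derives Ax {} \<phi>"

end

theory Submission
  imports Defs
begin

text \<open>Derivability in CK + N_Dia + wCD: from \<open>\<diamond>p\<close> and \<open>\<box>\<not>p\<close> the axiom K_Dia gives \<open>\<diamond>\<bottom>\<close>,
  which N_Dia refutes; so \<open>\<diamond>p \<rightarrow> \<not>\<box>\<not>p\<close>, and the hypothesis \<open>\<not>\<box>\<not>p \<rightarrow> \<box>q\<close> yields the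
  premise \<open>\<diamond>p \<rightarrow> \<box>q\<close> of wCD.
  Underivability in CK: CK is sound for intuitionistic birelational models in which \<open>\<diamond>\<close> is
  read as \<open>\<top>\<close>. Take worlds \<open>0 \<le> 1\<close> and \<open>0 R 2\<close> with \<open>p\<close> true only at 2. At 0, \<open>\<box>(p \<or> q)\<close>
  holds and \<open>\<box>q\<close> fails, while \<open>\<not>\<box>\<not>p\<close> fails at 0 and at 1 because \<open>\<box>\<not>p\<close> holds vacuously at
  the R-dead world 1; hence \<open>\<not>\<box>\<not>p \<rightarrow> \<box>q\<close> holds at 0.\<close>

definition subst3 :: "fm \<Rightarrow> fm \<Rightarrow> fm \<Rightarrow> nat \<Rightarrow> fm" where
  "subst3 a b c = (\<lambda>n. if n = 0 then a else if n = 1 then b else c)"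

lemma derives_K: "derives Ax \<Gamma> (Imp a (Imp b a))"
proof -
  have "derives Ax \<Gamma> (subst (subst3 a b Bot) (Imp P0 (Imp P1 P0)))"
    by (rule ax) (simp add: IPC_axioms_def)
  then show ?thesis by (simp add: subst3_def)
qed

lemma derives_S: "derives Ax \<Gamma> (Imp (Imp a (Imp b c)) (Imp (Imp a b) (Imp a c)))"
proof -
  have "derives Ax \<Gamma> (subst (subst3 a b c)
          (Imp (Imp P0 (Imp P1 P2)) (Imp (Imp P0 P1) (Imp P0 P2))))"
    by (rule ax) (simp add: IPC_axioms_def)
  then show ?thesis by (simp add: subst3_def)
qed

lemma derives_K_Dia: "derives Ax \<Gamma> (Imp (Box (Imp a b)) (Imp (Dia a) (Dia b)))"
proof -
  have "derives Ax \<Gamma> (subst (subst3 a b Bot) K_Dia)"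
    by (rule ax) simp
  then show ?thesis by (simp add: subst3_def K_Dia_def)
qed

lemma derives_N_Dia:
  assumes "N_Dia \<in> Ax"
  shows "derives Ax \<Gamma> (Imp (Dia Bot) Bot)"
proof -
  have "derives Ax \<Gamma> (subst Var N_Dia)"
    using assms by (intro ax) simp
  then show ?thesis by (simp add: N_Dia_def)
qed

lemma derives_wCD:
  assumes "wCD \<in> Ax"
  shows "derives Ax \<Gamma> (Imp (Box (Disj a b)) (Imp (Imp (Dia a) (Box b)) (Box b)))"
proof -
  have "derives Ax \<Gamma> (subst (subst3 a b Bot) wCD)"
    using assms by (intro ax) simp
  then show ?thesis by (simp add: subst3_def wCD_def)
qed

lemma derives_Imp_refl: "derives Ax \<Gamma> (Imp a a)"
  by (meson derives_K derives_S mp)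

lemma derives_deduction:
  assumes "derives Ax (insert a \<Gamma>) \<phi>"
  shows "derives Ax \<Gamma> (Imp a \<phi>)"
proof -
  have "derives Ax \<Gamma>' \<phi> \<Longrightarrow> \<Gamma>' = insert a \<Gamma> \<Longrightarrow> derives Ax \<Gamma> (Imp a \<phi>)" for \<Gamma>'
  proof (induction rule: derives.induct)
    case ax
    then show ?case by (meson derives_K derives.ax mp)
  next
    case el
    then show ?case by (metis derives_Imp_refl derives_K derives.el insert_iff mp)
  next
    case mp
    then show ?case by (meson derives_S derives.mp)
  next
    case nec
    then show ?case by (meson derives_K derives.nec derives.mp)
  qed
  then show ?thesis using assms by blast
qed

lemma derives_Dia_imp_Neg_Box_Neg:
  assumes "N_Dia \<in> Ax"
  shows "derives Ax \<Gamma> (Imp (Dia a) (Neg (Box (Neg a))))"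
proof -
  let ?\<Delta> = "insert (Box (Neg a)) (insert (Dia a) \<Gamma>)"
  have "derives Ax ?\<Delta> (Dia Bot)"
    by (metis Neg_def derives_K_Dia derives.el derives.mp insertI1 insertI2)
  then have "derives Ax ?\<Delta> Bot"
    using derives_N_Dia[OF assms] derives.mp by blast
  then show ?thesis
    unfolding Neg_def by (intro derives_deduction)
qed

lemma derivable_wCD_Neg_Box_Neg:
  assumes "N_Dia \<in> Ax" "wCD \<in> Ax"
  shows "derivable Ax
           (Imp (Box (Disj a b)) (Imp (Imp (Neg (Box (Neg a))) (Box b)) (Box b)))"
proof -
  let ?\<Gamma> = "{Imp (Neg (Box (Neg a))) (Box b), Box (Disj a b)}"
  have "derives Ax (insert (Dia a) ?\<Gamma>) (Neg (Box (Neg a)))"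
    using derives_Dia_imp_Neg_Box_Neg[OF assms(1)] by (meson derives.el derives.mp insertI1)
  then have "derives Ax (insert (Dia a) ?\<Gamma>) (Box b)"
    by (meson derives.el derives.mp insertI1 insertI2)
  then have "derives Ax ?\<Gamma> (Imp (Dia a) (Box b))"
    by (rule derives_deduction)
  then have "derives Ax ?\<Gamma> (Box b)"
    using derives_wCD[OF assms(2)] by (meson derives.el derives.mp insertI1 insertI2)
  then show ?thesis
    unfolding derivable_def by (intro derives_deduction) (simp add: insert_commute)
qed

text \<open>Reading \<open>\<diamond>\<close> as \<open>\<top>\<close> validates K_Dia trivially but refutes N_Dia.\<close>

fun holds :: "('w \<Rightarrow> 'w \<Rightarrow> bool) \<Rightarrow> ('w \<Rightarrow> 'w \<Rightarrow> bool) \<Rightarrow> (nat \<Rightarrow> 'w \<Rightarrow> bool) \<Rightarrow> fm \<Rightarrow> 'w \<Rightarrow> bool"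
where
  "holds le R V (Var n) x = V n x"
| "holds le R V Bot x = False"
| "holds le R V (Conj a b) x = (holds le R V a x \<and> holds le R V b x)"
| "holds le R V (Disj a b) x = (holds le R V a x \<or> holds le R V b x)"
| "holds le R V (Imp a b) x = (\<forall>y. le x y \<longrightarrow> holds le R V a y \<longrightarrow> holds le R V b y)"
| "holds le R V (Box a) x = (\<forall>y z. le x y \<longrightarrow> R y z \<longrightarrow> holds le R V a z)"
| "holds le R V (Dia a) x = True"

definition persistent :: "('w \<Rightarrow> 'w \<Rightarrow> bool) \<Rightarrow> (nat \<Rightarrow> 'w \<Rightarrow> bool) \<Rightarrow> bool" where
  "persistent le V \<longleftrightarrow> (\<forall>n x y. V n x \<longrightarrow> le x y \<longrightarrow> V n y)"

definition valid_in :: "('w \<Rightarrow> 'w \<Rightarrow> bool) \<Rightarrow> ('w \<Rightarrow> 'w \<Rightarrow> bool) \<Rightarrow> fm \<Rightarrow> bool" where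
  "valid_in le R \<phi> \<longleftrightarrow> (\<forall>V x. persistent le V \<longrightarrow> holds le R V \<phi> x)"

lemma holds_persistent:
  assumes "transp le" "persistent le V" "holds le R V \<phi> x" "le x y"
  shows "holds le R V \<phi> y"
  using assms(3,4)
proof (induction \<phi> arbitrary: x y)
  case Var
  then show ?case using assms(2) unfolding persistent_def by simp
next
  case Imp
  then show ?case using transpD[OF assms(1)] by (simp (no_asm_use)) blast
next
  case Box
  then show ?case using transpD[OF assms(1)] by (simp (no_asm_use)) blast
qed auto

lemma holds_subst: "holds le R V (subst \<sigma> \<phi>) x = holds le R (\<lambda>n. holds le R V (\<sigma> n)) \<phi> x"
  by (induction \<phi> arbitrary: x) auto

lemma persistent_holds_subst:
  assumes "transp le" "persistent le V"
  shows "persistent le (\<lambda>n. holds le R V (\<sigma> n))"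
  using holds_persistent[OF assms] unfolding persistent_def by blast

lemma holds_CK_axioms:
  assumes "reflp le" "transp le" "persistent le V" "\<chi> \<in> IPC_axioms \<union> {K_Box, K_Dia}"
  shows "holds le R V \<chi> x"
proof -
  have refl: "le y y" for y
    using reflpD[OF assms(1)] .
  have trans: "le y z \<Longrightarrow> le z w \<Longrightarrow> le y w" for y z w
    using transpD[OF assms(2)] by blast
  have persistent_Var: "V n y \<Longrightarrow> le y z \<Longrightarrow> V n z" for n y z
    using assms(3) unfolding persistent_def by blast
  from assms(4) show ?thesis
    unfolding IPC_axioms_def K_Box_def K_Dia_def
    by (simp; elim disjE; simp add: persistent_Var; meson refl trans persistent_Var)
qed

lemma valid_in_if_derivable_CK:
  assumes "reflp le" "transp le" "derivable {} \<phi>"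
  shows "valid_in le R \<phi>"
proof -
  have "derives Ax \<Gamma> \<phi> \<Longrightarrow> Ax = {} \<Longrightarrow> \<forall>\<psi>\<in>\<Gamma>. valid_in le R \<psi> \<Longrightarrow> valid_in le R \<phi>"
    for Ax \<Gamma> \<phi>
  proof (induction rule: derives.induct)
    case (ax \<chi> \<Gamma> \<sigma>)
    show ?case
      unfolding valid_in_def holds_subst
    proof (intro allI impI)
      fix V x
      assume "persistent le V"
      then show "holds le R (\<lambda>n. holds le R V (\<sigma> n)) \<chi> x"
        using ax holds_CK_axioms[OF assms(1,2) persistent_holds_subst[OF assms(2)]] by simp
    qed
  next
    case el
    then show ?case by simp
  next
    case (mp \<Gamma> \<phi> \<psi>)
    then show ?case
      using reflpD[OF assms(1)] unfolding valid_in_def holds.simps by blast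
  next
    case nec
    then show ?case unfolding valid_in_def by simp
  qed
  then show ?thesis using assms(3) unfolding derivable_def by blast
qed

definition countermodel_le :: "nat \<Rightarrow> nat \<Rightarrow> bool" where
  "countermodel_le x y \<longleftrightarrow> x = y \<or> (x = 0 \<and> y = 1)"

definition countermodel_R :: "nat \<Rightarrow> nat \<Rightarrow> bool" where
  "countermodel_R x y \<longleftrightarrow> x = 0 \<and> y = 2"

lemma not_valid_in_cm_wCD_Neg_Box_Neg:
  assumes "p \<noteq> q"
  shows "\<not> valid_in countermodel_le countermodel_R
           (Imp (Box (Disj (Var p) (Var q)))
                (Imp (Imp (Neg (Box (Neg (Var p)))) (Box (Var q))) (Box (Var q))))"
proof -
  let ?V = "\<lambda>n y. n = p \<and> y = (2::nat)"
  have "persistent countermodel_le ?V" by (auto simp: persistent_def countermodel_le_def)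
  moreover have "\<not> holds countermodel_le countermodel_R ?V
           (Imp (Box (Disj (Var p) (Var q)))
                (Imp (Imp (Neg (Box (Neg (Var p)))) (Box (Var q))) (Box (Var q)))) 0"
    using assms by (auto simp: countermodel_le_def countermodel_R_def Neg_def)
  ultimately show ?thesis unfolding valid_in_def by blast
qed

theorem mainTheorem19:
  fixes p q :: nat
  assumes "p \<noteq> q"
  shows "derivable {N_Dia, wCD}
           (Imp (Box (Disj (Var p) (Var q)))
                (Imp (Imp (Neg (Box (Neg (Var p)))) (Box (Var q))) (Box (Var q))))
       \<and> \<not> derivable {}
           (Imp (Box (Disj (Var p) (Var q)))
                (Imp (Imp (Neg (Box (Neg (Var p)))) (Box (Var q))) (Box (Var q))))"
proof -
  have "reflp countermodel_le" "transp countermodel_le"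
    by (auto simp: countermodel_le_def reflp_def transp_def)
  then show ?thesis
    using derivable_wCD_Neg_Box_Neg[of "{N_Dia, wCD}"] valid_in_if_derivable_CK
      not_valid_in_cm_wCD_Neg_Box_Neg[OF assms]
    by blast
qed

end
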